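(* For every Zygmund vector field $X$ on $\mathbb{S}^1$, its width satisfies $w(X)\le\frac83\lVert X\rVert_{cr}$.
   Context: A vector field $X$ on $\mathbb{S}^1=\partial\mathbb{D}^2$ is written $X(z)=iz\phi_X(z)$, $\phi_X:\mathbb{S}^1\to\mathbb{R}$. For $\eta\in\overline{\mathbb{D}^2}$, $\phi_X^-(\eta)=\sup\{a(\eta):a:\mathbb{R}^2\to\mathbb{R}\text{ affine},a|_{\mathbb{S}^1}\le\phi_X\}$ and $\phi_X^+(\eta)=\inf\{a(\eta):a\text{ affine},a|_{\mathbb{S}^1}\ge\phi_X\}$. The width is $w(X)=\sup_{\eta\in\mathbb{D}^2}\frac{\phi_X^+(\eta)-\phi_X^-(\eta)}{\sqrt{1-|\eta|^2}}$. Cross-ratio norm: identify $\mathbb{S}^1$ with $\mathbb{RP}^1=\mathbb{R}\cup\{\infty\}$ by a projective identification and write $X$ as $X(x)\partial_x$; for $Q=[a,b,c,d]$, $\mathrm{cr}(Q)=\frac{(b-a)(d-c)}{(c-b)(d-a)}$, $X[Q]=\frac{X(b)-X(a)}{b-a}-\frac{X(c)-X(b)}{c-b}+\frac{X(d)-X(c)}{d-c}-\frac{X(a)-X(d)}{a-d}$, and $\lVert X\rVert_{cr}=\sup_{\mathrm{cr}(Q)=1}|X[Q]|$. $X$ is Zygmund if it is continuous and $\lVert X\rVert_{cr}<\infty$. *)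

theory Defs
  imports "HOL-Analysis.Analysis"
begin

text \<open>A vector field X on the unit circle (boundary of the unit disc in the complex
plane) is X(z) = i z phi(z); we represent it by phi :: complex => real (only its
values on sphere 0 1 matter).\<close>

definition phi_minus :: "(complex \<Rightarrow> real) \<Rightarrow> complex \<Rightarrow> real" where
  "phi_minus \<phi> \<eta> = Sup {c + p * Re \<eta> + q * Im \<eta> | c p q.
      \<forall>z\<in>sphere 0 1. c + p * Re z + q * Im z \<le> \<phi> z}"

definition phi_plus :: "(complex \<Rightarrow> real) \<Rightarrow> complex \<Rightarrow> real" where
  "phi_plus \<phi> \<eta> = Inf {c + p * Re \<eta> + q * Im \<eta> | c p q.
      \<forall>z\<in>sphere 0 1. c + p * Re z + q * Im z \<ge> \<phi> z}"

definition width :: "(complex \<Rightarrow> real) \<Rightarrow> ereal" where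
  "width \<phi> = (SUP \<eta>\<in>ball 0 1.
      ereal ((phi_plus \<phi> \<eta> - phi_minus \<phi> \<eta>) / sqrt (1 - (cmod \<eta>)\<^sup>2)))"

text \<open>Projective identification RP^1 = R \<union> {\<infinity>} -> S^1 via the Cayley transform
x |-> (1 + i x)/(1 - i x) = exp(2 i arctan x). In this chart the vector field
X(z) = i z phi(z) d/dz becomes X(x) d/dx with X(x) = (1 + x^2)/2 * phi(cayley x).\<close>

definition cayley :: "real \<Rightarrow> complex" where
  "cayley x = (1 + \<i> * of_real x) / (1 - \<i> * of_real x)"

definition chart_field :: "(complex \<Rightarrow> real) \<Rightarrow> real \<Rightarrow> real" where
  "chart_field \<phi> x = (1 + x\<^sup>2) / 2 * \<phi> (cayley x)"

definition cross_ratio :: "real \<Rightarrow> real \<Rightarrow> real \<Rightarrow> real \<Rightarrow> real" where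
  "cross_ratio a b c d = ((b - a) * (d - c)) / ((c - b) * (d - a))"

definition field_cr :: "(real \<Rightarrow> real) \<Rightarrow> real \<Rightarrow> real \<Rightarrow> real \<Rightarrow> real \<Rightarrow> real" where
  "field_cr X a b c d =
     (X b - X a) / (b - a) - (X c - X b) / (c - b) + (X d - X c) / (d - c)
     - (X a - X d) / (a - d)"

definition cr_norm :: "(complex \<Rightarrow> real) \<Rightarrow> ereal" where
  "cr_norm \<phi> = (SUP Q\<in>{(a, b, c, d). cross_ratio a b c d = 1}.
      (case Q of (a, b, c, d) \<Rightarrow> ereal \<bar>field_cr (chart_field \<phi>) a b c d\<bar>))"

definition zygmund :: "(complex \<Rightarrow> real) \<Rightarrow> bool" where
  "zygmund \<phi> \<longleftrightarrow> continuous_on (sphere 0 1) \<phi> \<and> cr_norm \<phi> < \<infinity>"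

end

theory Submission
  imports Defs "HOL-Real_Asymp.Real_Asymp"
begin

text \<open>Fix \<eta> in the disc and weigh by w z = 1 - <\<eta>, z>, which is positive on the circle and
  equals 1 - |\<eta>|^2 at \<eta>. In the Cayley chart affine functions on the circle become quadratic
  polynomials, which the cross-ratio form annihilates, and w becomes a multiple of
  (x - s)^2 + r^2. Subtracting the affine function whose chart field interpolates X at s +- r/2
  and at infinity leaves a function \<psi> whose chart field Y still has cross-ratio norm at most
  N = ||X||_cr; letting one point of a quadruple of cross ratio 1 tend to infinity gives
  |Y (x + h) + Y (x - h) - 2 Y x| <= N |h|. At a point where |\<psi>| / w is maximal, this
  second-difference estimate between that point and the nearer zero s +- r/2 of Y shows
  |\<psi>| <= 4 N / (3 sqrt (1 - |\<eta>|^2)) w. Adding and subtracting this multiple of w gives an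
  affine majorant and minorant of \<phi> whose gap at \<eta> is (8/3) N sqrt (1 - |\<eta>|^2).\<close>

section \<open>The Cayley chart\<close>

lemma one_plus_square_pos [simp]: "0 < 1 + (x::real)\<^sup>2"
  by (simp add: add_pos_nonneg)

lemma one_plus_square_neq_zero [simp]: "1 + (x::real)\<^sup>2 \<noteq> 0"
  using one_plus_square_pos[of x] by linarith

lemma cayley_eq: "cayley x = Complex ((1 - x\<^sup>2) / (1 + x\<^sup>2)) (2 * x / (1 + x\<^sup>2))"
  by (simp add: cayley_def complex_eq_iff Re_divide Im_divide field_simps power2_eq_square)

lemma Re_cayley_mult: "(1 + x\<^sup>2) * Re (cayley x) = 1 - x\<^sup>2"
  by (simp add: cayley_eq)

lemma Im_cayley_mult: "(1 + x\<^sup>2) * Im (cayley x) = 2 * x"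
  by (simp add: cayley_eq)

lemma norm_cayley [simp]: "cmod (cayley x) = 1"
proof -
  have "(1 - x\<^sup>2)\<^sup>2 + (2 * x)\<^sup>2 = (1 + x\<^sup>2)\<^sup>2"
    by algebra
  then show ?thesis
    by (simp add: cayley_eq cmod_def power_divide add_divide_distrib[symmetric])
qed

lemma continuous_on_cayley: "continuous_on UNIV cayley"
  unfolding cayley_eq[abs_def] by (intro continuous_intros) auto

lemma cayley_tendsto_at_top: "(cayley \<longlongrightarrow> -1) at_top"
proof -
  have "((\<lambda>x. Complex ((1 - x\<^sup>2) / (1 + x\<^sup>2)) (2 * x / (1 + x\<^sup>2))) \<longlongrightarrow> Complex (-1) 0) at_top"
    by (intro tendsto_Complex; real_asymp)
  moreover have "Complex (-1) 0 = -1"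
    by (simp add: complex_eq_iff)
  ultimately show ?thesis
    by (simp add: cayley_eq[abs_def])
qed

lemma cayley_inverse:
  assumes "z \<in> sphere 0 1" "z \<noteq> -1"
  shows "cayley (Im z / (1 + Re z)) = z"
proof -
  have circle: "(Re z)\<^sup>2 + (Im z)\<^sup>2 = 1"
    using assms(1) by (simp add: cmod_def)
  have "Re z \<noteq> -1"
    using assms(2) circle by (auto simp: complex_eq_iff)
  moreover have "Re z \<ge> -1"
    using abs_Re_le_cmod[of z] assms(1) by simp
  ultimately have pos: "1 + Re z > 0"
    by simp
  define t where "t = Im z / (1 + Re z)"
  have "(Im z)\<^sup>2 = (1 - Re z) * (1 + Re z)"
    using circle by (simp add: algebra_simps power2_eq_square)
  then have "t\<^sup>2 = (1 - Re z) / (1 + Re z)"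
    using pos by (simp add: t_def power_divide power2_eq_square)
  then have "1 + t\<^sup>2 = 2 / (1 + Re z)" "1 - t\<^sup>2 = 2 * Re z / (1 + Re z)"
    using pos by (simp_all add: field_simps)
  then show ?thesis
    using pos by (simp add: cayley_eq complex_eq_iff t_def)
qed

lemma chart_field_diff: "chart_field (\<lambda>z. f z - g z) x = chart_field f x - chart_field g x"
  by (simp add: chart_field_def right_diff_distrib)

lemma chart_field_affine:
  "chart_field (\<lambda>z. (A0 + A2) + (A0 - A2) * Re z + A1 * Im z) x = A0 + A1 * x + A2 * x\<^sup>2"
proof -
  have "chart_field (\<lambda>z. (A0 + A2) + (A0 - A2) * Re z + A1 * Im z) x
      = ((A0 + A2) * (1 + x\<^sup>2) + (A0 - A2) * ((1 + x\<^sup>2) * Re (cayley x))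
          + A1 * ((1 + x\<^sup>2) * Im (cayley x))) / 2"
    by (simp add: chart_field_def field_simps)
  also have "\<dots> = A0 + A1 * x + A2 * x\<^sup>2"
    unfolding Re_cayley_mult Im_cayley_mult by (simp add: algebra_simps)
  finally show ?thesis .
qed

lemma continuous_on_chart_field:
  assumes "continuous_on (sphere 0 1) \<phi>"
  shows "continuous_on UNIV (chart_field \<phi>)"
proof -
  have "continuous_on UNIV (\<lambda>x. \<phi> (cayley x))"
    by (rule continuous_on_compose2[OF assms continuous_on_cayley]) auto
  then show ?thesis
    unfolding chart_field_def[abs_def] by (intro continuous_intros) auto
qed

lemma chart_field_div_one_plus_square: "chart_field \<phi> x / (1 + x\<^sup>2) = \<phi> (cayley x) / 2"
proof -
  have "chart_field \<phi> x = (1 + x\<^sup>2) * (\<phi> (cayley x) / 2)"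
    by (simp add: chart_field_def)
  then show ?thesis
    by (simp only: nonzero_mult_div_cancel_left[OF one_plus_square_neq_zero])
qed

lemma chart_field_tendsto_at_top:
  assumes "continuous_on (sphere 0 1) \<phi>"
  shows "((\<lambda>x. chart_field \<phi> x / (1 + x\<^sup>2)) \<longlongrightarrow> \<phi> (-1) / 2) at_top"
  unfolding chart_field_div_one_plus_square
  by (intro tendsto_divide tendsto_const continuous_on_tendsto_compose[OF assms cayley_tendsto_at_top])
    auto

section \<open>From the cross-ratio norm to second differences\<close>

definition cr_bounded :: "real \<Rightarrow> (real \<Rightarrow> real) \<Rightarrow> bool" where
  "cr_bounded N X \<longleftrightarrow> (\<forall>a b c d. cross_ratio a b c d = 1 \<longrightarrow> \<bar>field_cr X a b c d\<bar> \<le> N)"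

definition second_diff_bounded :: "real \<Rightarrow> (real \<Rightarrow> real) \<Rightarrow> bool" where
  "second_diff_bounded N Y \<longleftrightarrow> (\<forall>x h. \<bar>Y (x + h) + Y (x - h) - 2 * Y x\<bar> \<le> N * \<bar>h\<bar>)"

lemma cross_ratio_eq_1_imp_distinct:
  assumes "cross_ratio a b c d = 1"
  shows "b \<noteq> a" "c \<noteq> b" "d \<noteq> c" "a \<noteq> d"
  using assms unfolding cross_ratio_def by auto

lemma field_cr_diff:
  "field_cr (\<lambda>x. X x - Y x) a b c d = field_cr X a b c d - field_cr Y a b c d"
  by (simp add: field_cr_def diff_divide_distrib)

lemma field_cr_quadratic:
  assumes "b \<noteq> a" "c \<noteq> b" "d \<noteq> c" "a \<noteq> d"
  shows "field_cr (\<lambda>x. A0 + A1 * x + A2 * x\<^sup>2) a b c d = 0"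
proof -
  have slope: "((A0 + A1 * y + A2 * y\<^sup>2) - (A0 + A1 * x + A2 * x\<^sup>2)) / (y - x) = A1 + A2 * (x + y)"
    if "x \<noteq> y" for x y :: real
  proof -
    have "(A0 + A1 * y + A2 * y\<^sup>2) - (A0 + A1 * x + A2 * x\<^sup>2) = (A1 + A2 * (x + y)) * (y - x)"
      by (simp add: algebra_simps power2_eq_square)
    with that show ?thesis
      by simp
  qed
  show ?thesis
    unfolding field_cr_def using assms slope[of a b] slope[of b c] slope[of c d] slope[of d a]
    by (simp add: algebra_simps)
qed

lemma cr_bounded_diff_quadratic:
  assumes "cr_bounded N X"
  shows "cr_bounded N (\<lambda>x. X x - (A0 + A1 * x + A2 * x\<^sup>2))"
  using assms field_cr_quadratic[OF cross_ratio_eq_1_imp_distinct]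
  by (simp add: cr_bounded_def field_cr_diff)

text \<open>As d tends to infinity, this b tends to the midpoint (a + c) / 2.\<close>

lemma cross_ratio_eq_1_witness:
  assumes "a \<noteq> c" "d \<noteq> a" "d \<noteq> c" "2 * d \<noteq> a + c"
  shows "cross_ratio a (((a + c) * d - 2 * a * c) / (2 * d - a - c)) c d = 1"
proof -
  define b where "b = ((a + c) * d - 2 * a * c) / (2 * d - a - c)"
  have D: "2 * d - a - c \<noteq> 0"
    using assms(4) by simp
  have "b - a = (c - a) * (d - a) / (2 * d - a - c)" "c - b = (c - a) * (d - c) / (2 * d - a - c)"
    using D by (simp_all add: b_def field_simps)
  then have "(b - a) * (d - c) = (c - b) * (d - a)"
    by simp
  moreover have "(c - b) * (d - a) \<noteq> 0"
    using \<open>c - b = _\<close> assms D by simp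
  ultimately show ?thesis
    unfolding b_def[symmetric] cross_ratio_def by simp
qed

lemma field_cr_tendsto_at_top:
  fixes Y :: "real \<Rightarrow> real"
  assumes "isCont Y m" "((\<lambda>d. Y d / (1 + d\<^sup>2)) \<longlongrightarrow> 0) at_top" "(b \<longlongrightarrow> m) at_top"
    and "m \<noteq> a" "m \<noteq> c"
  shows "((\<lambda>d. field_cr Y a (b d) c d) \<longlongrightarrow> (Y m - Y a) / (m - a) - (Y c - Y m) / (c - m)) at_top"
proof -
  have near: "((\<lambda>d. (Y (b d) - Y a) / (b d - a) - (Y c - Y (b d)) / (c - b d))
      \<longlongrightarrow> (Y m - Y a) / (m - a) - (Y c - Y m) / (c - m)) at_top"
    using assms(4,5) by (intro tendsto_intros isCont_tendsto_compose[OF assms(1,3)] assms(3)) auto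
  have "((\<lambda>d. Y d / (1 + d\<^sup>2) * ((1 + d\<^sup>2) * (1 / (d - c) - 1 / (d - a)))
      - Y c / (d - c) + Y a / (d - a)) \<longlongrightarrow> 0 * (c - a) - 0 + 0) at_top"
    by (intro tendsto_intros assms(2); real_asymp)
  moreover have "(Y d - Y c) / (d - c) - (Y a - Y d) / (a - d)
      = Y d / (1 + d\<^sup>2) * ((1 + d\<^sup>2) * (1 / (d - c) - 1 / (d - a))) - Y c / (d - c) + Y a / (d - a)"
    for d
  proof -
    have "(Y a - Y d) / (a - d) = (Y d - Y a) / (d - a)"
      by (metis minus_diff_eq minus_divide_divide)
    then show ?thesis
      by (simp add: diff_divide_distrib right_diff_distrib)
  qed
  ultimately have far: "((\<lambda>d. (Y d - Y c) / (d - c) - (Y a - Y d) / (a - d)) \<longlongrightarrow> 0) at_top"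
    by simp
  show ?thesis
    using tendsto_add[OF near far] by (simp add: field_cr_def add_diff_eq)
qed

lemma cr_bounded_imp_second_diff_bounded:
  fixes Y :: "real \<Rightarrow> real"
  assumes "cr_bounded N Y" "continuous_on UNIV Y" "((\<lambda>d. Y d / (1 + d\<^sup>2)) \<longlongrightarrow> 0) at_top"
  shows "second_diff_bounded N Y"
  unfolding second_diff_bounded_def
proof (intro allI)
  fix x h :: real
  show "\<bar>Y (x + h) + Y (x - h) - 2 * Y x\<bar> \<le> N * \<bar>h\<bar>"
  proof (cases "h = 0")
    case False
    define a c where "a = x - h" and "c = x + h"
    define b where "b d = ((a + c) * d - 2 * a * c) / (2 * d - a - c)" for d
    have "(b \<longlongrightarrow> x) at_top"
      unfolding b_def a_def c_def by real_asymp
    then have lim: "((\<lambda>d. field_cr Y a (b d) c d) \<longlongrightarrow> (Y x - Y a) / (x - a) - (Y c - Y x) / (c - x)) at_top"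
      using False assms(2,3)
      by (intro field_cr_tendsto_at_top) (auto simp: a_def c_def continuous_on_eq_continuous_at)
    have "eventually (\<lambda>d. \<bar>field_cr Y a (b d) c d\<bar> \<le> N) at_top"
      using eventually_gt_at_top[of "\<bar>a\<bar> + \<bar>c\<bar>"]
    proof eventually_elim
      case (elim d)
      then have "cross_ratio a (b d) c d = 1"
        unfolding b_def using False
        by (intro cross_ratio_eq_1_witness) (auto simp: a_def c_def)
      with assms(1) show ?case
        by (simp add: cr_bounded_def)
    qed
    then have "\<bar>(Y x - Y a) / (x - a) - (Y c - Y x) / (c - x)\<bar> \<le> N"
      using tendsto_upperbound[OF tendsto_rabs[OF lim]] by simp
    moreover have "(Y x - Y a) / (x - a) - (Y c - Y x) / (c - x) = - (Y (x + h) + Y (x - h) - 2 * Y x) / h"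
      using False by (simp add: a_def c_def field_simps)
    ultimately show ?thesis
      using False by (simp add: abs_divide divide_le_eq mult.commute)
  qed simp
qed

lemma chart_field_second_diff_bounded:
  assumes "continuous_on (sphere 0 1) \<psi>" "\<psi> (-1) = 0" "cr_bounded N (chart_field \<psi>)"
  shows "second_diff_bounded N (chart_field \<psi>)"
  using assms(3) continuous_on_chart_field[OF assms(1)] chart_field_tendsto_at_top[OF assms(1)] assms(2)
  by (intro cr_bounded_imp_second_diff_bounded) auto

section \<open>Functions touching a quadratic majorant\<close>

lemma reflection_bound_outside:
  fixes Y :: "real \<Rightarrow> real"
  assumes "second_diff_bounded N Y"
    and majorant: "\<forall>w. \<bar>Y w\<bar> \<le> \<mu> * ((w - s)\<^sup>2 + r\<^sup>2)"
    and touch: "\<bar>Y v\<bar> = \<mu> * ((v - s)\<^sup>2 + r\<^sup>2)"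
    and "Y z = 0" "\<bar>z - s\<bar> = r / 2" "(v - z) * (z - s) > 0"
  shows "2 * r * \<mu> \<le> N"
proof -
  define w where "w = 2 * z - v"
  have "\<bar>Y (z + (v - z)) + Y (z - (v - z)) - 2 * Y z\<bar> \<le> N * \<bar>v - z\<bar>"
    using assms(1) unfolding second_diff_bounded_def by blast
  then have "\<bar>Y v + Y w - 2 * Y z\<bar> \<le> N * \<bar>v - z\<bar>"
    by (simp add: w_def)
  then have "\<mu> * ((v - s)\<^sup>2 + r\<^sup>2) \<le> N * \<bar>v - z\<bar> + \<mu> * ((w - s)\<^sup>2 + r\<^sup>2)"
    using majorant[rule_format, of w] touch \<open>Y z = 0\<close> by linarith
  moreover have "(v - s)\<^sup>2 - (w - s)\<^sup>2 = 2 * r * \<bar>v - z\<bar>"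
  proof -
    have "(v - s)\<^sup>2 - (w - s)\<^sup>2 = 4 * ((v - z) * (z - s))"
      unfolding w_def by (simp add: algebra_simps power2_eq_square)
    also have "(v - z) * (z - s) = \<bar>v - z\<bar> * \<bar>z - s\<bar>"
      using assms(6) by (metis abs_mult abs_of_pos)
    finally show ?thesis
      using assms(5) by simp
  qed
  ultimately have "\<mu> * (2 * r) * \<bar>v - z\<bar> \<le> N * \<bar>v - z\<bar>"
    by (simp add: algebra_simps)
  moreover have "\<bar>v - z\<bar> > 0"
    using assms(6) by auto
  ultimately show ?thesis
    by (simp add: mult.commute)
qed

lemma reflection_bound_inside:
  fixes Y :: "real \<Rightarrow> real"
  assumes "second_diff_bounded N Y" "N \<ge> 0" "r > 0"
    and majorant: "\<forall>w. \<bar>Y w\<bar> \<le> \<mu> * ((w - s)\<^sup>2 + r\<^sup>2)"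
    and touch: "\<bar>Y v\<bar> = \<mu> * ((v - s)\<^sup>2 + r\<^sup>2)"
    and "Y z = 0" "\<bar>z - s\<bar> = r / 2" "\<bar>v - z\<bar> \<le> r / 2"
  shows "3 * r * \<mu> \<le> 2 * N"
proof -
  define w where "w = 2 * v - z"
  define \<delta> where "\<delta> = \<bar>v - z\<bar>"
  define P where "P = 5 / 4 * r\<^sup>2 - 2 * \<delta>\<^sup>2"
  have "\<bar>Y (v + (v - z)) + Y (v - (v - z)) - 2 * Y v\<bar> \<le> N * \<bar>v - z\<bar>"
    using assms(1) unfolding second_diff_bounded_def by blast
  then have "\<bar>Y w + Y z - 2 * Y v\<bar> \<le> N * \<delta>"
    by (simp add: w_def \<delta>_def)
  then have "2 * (\<mu> * ((v - s)\<^sup>2 + r\<^sup>2)) \<le> N * \<delta> + \<mu> * ((w - s)\<^sup>2 + r\<^sup>2)"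
    using majorant[rule_format, of w] touch \<open>Y z = 0\<close> by linarith
  moreover have P_eq: "2 * ((v - s)\<^sup>2 + r\<^sup>2) - ((w - s)\<^sup>2 + r\<^sup>2) = P"
  proof -
    have "2 * ((v - s)\<^sup>2 + r\<^sup>2) - ((w - s)\<^sup>2 + r\<^sup>2) = (z - s)\<^sup>2 + r\<^sup>2 - 2 * (v - z)\<^sup>2"
      unfolding w_def by (simp add: algebra_simps power2_eq_square)
    moreover have "(z - s)\<^sup>2 = (r / 2)\<^sup>2"
      using assms(7) by (metis power2_abs)
    ultimately show ?thesis
      unfolding P_def \<delta>_def by (simp add: power_divide)
  qed
  moreover have "\<mu> * P = 2 * (\<mu> * ((v - s)\<^sup>2 + r\<^sup>2)) - \<mu> * ((w - s)\<^sup>2 + r\<^sup>2)"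
    unfolding P_eq[symmetric] by (simp add: algebra_simps)
  ultimately have "\<mu> * P \<le> N * \<delta>"
    by linarith
  moreover have "3 * r * \<delta> \<le> 2 * P"
  proof -
    have "(2 * \<delta> - r) * (4 * \<delta> + 5 * r) \<le> 0"
      using assms(3,8) unfolding \<delta>_def by (intro mult_nonpos_nonneg) auto
    then show ?thesis
      unfolding P_def by (simp add: algebra_simps power2_eq_square)
  qed
  moreover have "P > 0"
  proof -
    have "\<delta>\<^sup>2 \<le> (r / 2)\<^sup>2"
      using assms(8) unfolding \<delta>_def by (intro power_mono) auto
    then have "\<delta>\<^sup>2 \<le> r\<^sup>2 / 4"
      by (simp add: power_divide)
    moreover have "r\<^sup>2 > 0"
      using assms(3) by simp
    ultimately show ?thesis
      unfolding P_def by linarith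
  qed
  ultimately have "(3 * r * \<mu>) * P \<le> (2 * N) * P"
  proof -
    assume "\<mu> * P \<le> N * \<delta>" "3 * r * \<delta> \<le> 2 * P"
    have "(3 * r * \<mu>) * P = 3 * r * (\<mu> * P)"
      by simp
    also have "\<dots> \<le> 3 * r * (N * \<delta>)"
      using \<open>\<mu> * P \<le> N * \<delta>\<close> assms(3) by simp
    also have "\<dots> = N * (3 * r * \<delta>)"
      by simp
    also have "\<dots> \<le> N * (2 * P)"
      using \<open>3 * r * \<delta> \<le> 2 * P\<close> assms(2) by (rule mult_left_mono)
    finally show ?thesis
      by simp
  qed
  with \<open>P > 0\<close> show ?thesis
    by simp
qed

lemma majorant_touching_bound:
  fixes Y :: "real \<Rightarrow> real"
  assumes "second_diff_bounded N Y" "N \<ge> 0" "r > 0" "\<mu> \<ge> 0"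
    and "\<forall>w. \<bar>Y w\<bar> \<le> \<mu> * ((w - s)\<^sup>2 + r\<^sup>2)" "\<bar>Y v\<bar> = \<mu> * ((v - s)\<^sup>2 + r\<^sup>2)"
    and "Y (s - r / 2) = 0" "Y (s + r / 2) = 0"
  shows "3 * r * \<mu> \<le> 2 * N"
proof -
  have rmu: "0 \<le> r * \<mu>"
    using assms(3,4) by simp
  consider "v < s - r" | "s - r \<le> v" "v < s" | "s \<le> v" "v \<le> s + r" | "s + r < v"
    by linarith
  then show ?thesis
  proof cases
    case 1
    have "2 * r * \<mu> \<le> N"
      by (rule reflection_bound_outside[OF assms(1,5,6,7)]) (use 1 assms(3) in \<open>auto simp: mult_less_0_iff\<close>)
    with rmu show ?thesis
      by linarith
  next
    case 2
    then have "\<bar>v - (s - r / 2)\<bar> \<le> r / 2"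
      unfolding abs_le_iff by linarith
    from reflection_bound_inside[OF assms(1-3,5-7) _ this] assms(3) show ?thesis
      by simp
  next
    case 3
    then have "\<bar>v - (s + r / 2)\<bar> \<le> r / 2"
      unfolding abs_le_iff by linarith
    from reflection_bound_inside[OF assms(1-3,5,6,8) _ this] assms(3) show ?thesis
      by simp
  next
    case 4
    have "2 * r * \<mu> \<le> N"
      by (rule reflection_bound_outside[OF assms(1,5,6,8)]) (use 4 assms(3) in auto)
    with rmu show ?thesis
      by linarith
  qed
qed

section \<open>Affine majorants and minorants on the disc\<close>

lemma affine_nonneg_on_cball:
  assumes nonneg: "\<forall>z\<in>sphere 0 1. 0 \<le> c + p * Re z + q * Im z" and "cmod \<eta> \<le> 1"
  shows "0 \<le> c + p * Re \<eta> + q * Im \<eta>"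
proof -
  define w where "w = Complex p q"
  have inner_eq: "p * Re z + q * Im z = inner w z" for z
    by (simp add: w_def inner_complex_def)
  have "norm w \<le> c"
  proof (cases "w = 0")
    case True
    moreover have "0 \<le> c"
      using True nonneg[rule_format, of 1] by (simp add: w_def complex_eq_iff)
    ultimately show ?thesis
      by simp
  next
    case False
    then have "- sgn w \<in> sphere 0 1"
      by (simp add: norm_sgn)
    with nonneg have "0 \<le> c + p * Re (- sgn w) + q * Im (- sgn w)"
      by blast
    then have "0 \<le> c + inner w (- sgn w)"
      by (metis add.assoc inner_eq)
    moreover have "inner w (sgn w) = norm w"
      using False by (simp add: sgn_div_norm dot_square_norm power2_eq_square)
    ultimately show ?thesis
      by simp
  qed
  moreover have "\<bar>inner w \<eta>\<bar> \<le> norm w"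
    using Cauchy_Schwarz_ineq2[of w \<eta>] mult_left_le[OF assms(2) norm_ge_zero[of w]] by linarith
  ultimately show ?thesis
    using inner_eq[of \<eta>] by linarith
qed

lemma phi_plus_le_majorant:
  assumes majorant: "\<forall>z\<in>sphere 0 1. \<phi> z \<le> c + p * Re z + q * Im z"
    and minorant: "\<forall>z\<in>sphere 0 1. c' + p' * Re z + q' * Im z \<le> \<phi> z"
    and "cmod \<eta> \<le> 1"
  shows "phi_plus \<phi> \<eta> \<le> c + p * Re \<eta> + q * Im \<eta>"
  unfolding phi_plus_def
proof (rule cInf_lower)
  show "c + p * Re \<eta> + q * Im \<eta> \<in> {c + p * Re \<eta> + q * Im \<eta> | c p q.
      \<forall>z\<in>sphere 0 1. c + p * Re z + q * Im z \<ge> \<phi> z}"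
    using majorant by blast
  show "bdd_below {c + p * Re \<eta> + q * Im \<eta> | c p q.
      \<forall>z\<in>sphere 0 1. c + p * Re z + q * Im z \<ge> \<phi> z}"
  proof (rule bdd_belowI, safe)
    fix a b d
    assume "\<forall>z\<in>sphere 0 1. \<phi> z \<le> a + b * Re z + d * Im z"
    with minorant have "\<forall>z\<in>sphere 0 1. 0 \<le> (a - c') + (b - p') * Re z + (d - q') * Im z"
      by (fastforce simp: algebra_simps)
    from affine_nonneg_on_cball[OF this assms(3)]
    show "c' + p' * Re \<eta> + q' * Im \<eta> \<le> a + b * Re \<eta> + d * Im \<eta>"
      by (simp add: algebra_simps)
  qed
qed

lemma phi_minus_ge_minorant:
  assumes majorant: "\<forall>z\<in>sphere 0 1. \<phi> z \<le> c + p * Re z + q * Im z"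
    and minorant: "\<forall>z\<in>sphere 0 1. c' + p' * Re z + q' * Im z \<le> \<phi> z"
    and "cmod \<eta> \<le> 1"
  shows "c' + p' * Re \<eta> + q' * Im \<eta> \<le> phi_minus \<phi> \<eta>"
  unfolding phi_minus_def
proof (rule cSup_upper)
  show "c' + p' * Re \<eta> + q' * Im \<eta> \<in> {c + p * Re \<eta> + q * Im \<eta> | c p q.
      \<forall>z\<in>sphere 0 1. c + p * Re z + q * Im z \<le> \<phi> z}"
    using minorant by blast
  show "bdd_above {c + p * Re \<eta> + q * Im \<eta> | c p q.
      \<forall>z\<in>sphere 0 1. c + p * Re z + q * Im z \<le> \<phi> z}"
  proof (rule bdd_aboveI, safe)
    fix a b d
    assume "\<forall>z\<in>sphere 0 1. a + b * Re z + d * Im z \<le> \<phi> z"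
    with majorant have "\<forall>z\<in>sphere 0 1. 0 \<le> (c - a) + (p - b) * Re z + (q - d) * Im z"
      by (fastforce simp: algebra_simps)
    from affine_nonneg_on_cball[OF this assms(3)]
    show "a + b * Re \<eta> + d * Im \<eta> \<le> c + p * Re \<eta> + q * Im \<eta>"
      by (simp add: algebra_simps)
  qed
qed

lemma phi_plus_minus_le_weight_band:
  assumes band: "\<forall>z\<in>sphere 0 1. \<bar>\<phi> z - (c + p * Re z + q * Im z)\<bar> \<le> K * (1 - inner \<eta> z)"
    and "cmod \<eta> \<le> 1"
  shows "phi_plus \<phi> \<eta> - phi_minus \<phi> \<eta> \<le> 2 * K * (1 - (cmod \<eta>)\<^sup>2)"
proof -
  have majorant: "\<forall>z\<in>sphere 0 1. \<phi> z \<le> (c + K) + (p - K * Re \<eta>) * Re z + (q - K * Im \<eta>) * Im z"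
    and minorant: "\<forall>z\<in>sphere 0 1. (c - K) + (p + K * Re \<eta>) * Re z + (q + K * Im \<eta>) * Im z \<le> \<phi> z"
    using band by (fastforce simp: inner_complex_def algebra_simps abs_le_iff)+
  have "phi_plus \<phi> \<eta> \<le> (c + K) + (p - K * Re \<eta>) * Re \<eta> + (q - K * Im \<eta>) * Im \<eta>"
    and "(c - K) + (p + K * Re \<eta>) * Re \<eta> + (q + K * Im \<eta>) * Im \<eta> \<le> phi_minus \<phi> \<eta>"
    using phi_plus_le_majorant[OF majorant minorant] phi_minus_ge_minorant[OF majorant minorant]
      \<open>cmod \<eta> \<le> 1\<close> by auto
  moreover have "((c + K) + (p - K * Re \<eta>) * Re \<eta> + (q - K * Im \<eta>) * Im \<eta>)
      - ((c - K) + (p + K * Re \<eta>) * Re \<eta> + (q + K * Im \<eta>) * Im \<eta>) = 2 * K * (1 - (cmod \<eta>)\<^sup>2)"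
    unfolding cmod_power2 by (simp add: algebra_simps power2_eq_square)
  ultimately show ?thesis
    by linarith
qed

lemma continuous_ratio_attains_max:
  fixes f g :: "'a::topological_space \<Rightarrow> real"
  assumes "compact S" "S \<noteq> {}" "continuous_on S f" "continuous_on S g" "\<forall>z\<in>S. 0 < g z"
  obtains M z0 where "z0 \<in> S" "0 \<le> M" "\<bar>f z0\<bar> = M * g z0" "\<forall>z\<in>S. \<bar>f z\<bar> \<le> M * g z"
proof -
  have "continuous_on S (\<lambda>z. \<bar>f z\<bar> / g z)"
    using assms(3-5) by (intro continuous_intros) auto
  then obtain z0 where "z0 \<in> S" and max: "\<forall>z\<in>S. \<bar>f z\<bar> / g z \<le> \<bar>f z0\<bar> / g z0"
    using continuous_attains_sup[OF assms(1,2)] by blast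
  show ?thesis
  proof
    show "z0 \<in> S" "0 \<le> \<bar>f z0\<bar> / g z0" "\<bar>f z0\<bar> = \<bar>f z0\<bar> / g z0 * g z0"
      using \<open>z0 \<in> S\<close> assms(5) by auto
    show "\<forall>z\<in>S. \<bar>f z\<bar> \<le> \<bar>f z0\<bar> / g z0 * g z"
      using max assms(5) by (simp add: divide_le_eq)
  qed
qed

lemma inner_weight_pos:
  fixes \<eta> z :: complex
  assumes "cmod \<eta> < 1" "z \<in> sphere 0 1"
  shows "0 < 1 - inner \<eta> z"
  using Cauchy_Schwarz_ineq2[of \<eta> z] assms by simp

text \<open>For \<eta> in the Klein model of the disc, chart_center \<eta> + i chart_radius
  \<eta> is the corresponding point of the upper half-plane model in the Cayley chart.\<close>

definition chart_center :: "complex \<Rightarrow> real" where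
  "chart_center \<eta> = Im \<eta> / (1 + Re \<eta>)"

definition chart_radius :: "complex \<Rightarrow> real" where
  "chart_radius \<eta> = sqrt (1 - (cmod \<eta>)\<^sup>2) / (1 + Re \<eta>)"

lemma one_plus_Re_pos: "cmod \<eta> < 1 \<Longrightarrow> 0 < 1 + Re \<eta>"
  using abs_Re_le_cmod[of \<eta>] by linarith

lemma chart_radius_pos: "cmod \<eta> < 1 \<Longrightarrow> 0 < chart_radius \<eta>"
  using one_plus_Re_pos[of \<eta>] by (simp add: chart_radius_def abs_square_less_1)

lemma chart_field_inner_weight:
  assumes "cmod \<eta> < 1"
  shows "chart_field (\<lambda>z. 1 - inner \<eta> z) x
    = (1 + Re \<eta>) / 2 * ((x - chart_center \<eta>)\<^sup>2 + (chart_radius \<eta>)\<^sup>2)"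
proof -
  have pos: "0 < 1 + Re \<eta>"
    using assms by (rule one_plus_Re_pos)
  have "(\<lambda>z. 1 - inner \<eta> z) = (\<lambda>z. ((1 - Re \<eta>) / 2 + (1 + Re \<eta>) / 2)
      + ((1 - Re \<eta>) / 2 - (1 + Re \<eta>) / 2) * Re z + (- Im \<eta>) * Im z)"
    by (simp add: fun_eq_iff inner_complex_def field_simps)
  then have "chart_field (\<lambda>z. 1 - inner \<eta> z) x = (1 - Re \<eta>) / 2 + (- Im \<eta>) * x + (1 + Re \<eta>) / 2 * x\<^sup>2"
    by (simp only: chart_field_affine)
  also have "\<dots> = (1 + Re \<eta>) / 2 * ((x - chart_center \<eta>)\<^sup>2 + (chart_radius \<eta>)\<^sup>2)"
  proof -
    have "(cmod \<eta>)\<^sup>2 < 1"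
      using assms by (simp add: abs_square_less_1)
    then have k2: "(sqrt (1 - (cmod \<eta>)\<^sup>2))\<^sup>2 = 1 - (Re \<eta>)\<^sup>2 - (Im \<eta>)\<^sup>2"
      by (subst real_sqrt_pow2) (auto simp: cmod_power2)
    show ?thesis
      unfolding chart_center_def chart_radius_def power_divide k2
      using pos by (simp add: field_simps) (simp add: algebra_simps power2_eq_square)
  qed
  finally show ?thesis .
qed

lemma chart_field_abs_minus_weight:
  assumes "cmod \<eta> < 1"
  shows "\<bar>chart_field \<psi> x\<bar> - M * ((1 + Re \<eta>) / 2 * ((x - chart_center \<eta>)\<^sup>2 + (chart_radius \<eta>)\<^sup>2))
    = (1 + x\<^sup>2) / 2 * (\<bar>\<psi> (cayley x)\<bar> - M * (1 - inner \<eta> (cayley x)))"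
proof -
  have weight: "(1 + x\<^sup>2) / 2 * (1 - inner \<eta> (cayley x))
      = (1 + Re \<eta>) / 2 * ((x - chart_center \<eta>)\<^sup>2 + (chart_radius \<eta>)\<^sup>2)"
    using chart_field_inner_weight[OF assms, of x] by (simp add: chart_field_def)
  have "\<bar>chart_field \<psi> x\<bar> = (1 + x\<^sup>2) / 2 * \<bar>\<psi> (cayley x)\<bar>"
    by (simp add: chart_field_def abs_mult)
  then show ?thesis
    unfolding weight[symmetric] by (simp only: algebra_simps)
qed

lemma touching_weight_bound:
  fixes \<psi> :: "complex \<Rightarrow> real"
  assumes \<eta>: "cmod \<eta> < 1" and "N \<ge> 0" "0 \<le> M"
    and "second_diff_bounded N (chart_field \<psi>)"
    and zeros: "chart_field \<psi> (chart_center \<eta> - chart_radius \<eta> / 2) = 0"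
      "chart_field \<psi> (chart_center \<eta> + chart_radius \<eta> / 2) = 0"
    and bound: "\<forall>z\<in>sphere 0 1. \<bar>\<psi> z\<bar> \<le> M * (1 - inner \<eta> z)"
    and "z0 \<in> sphere 0 1" "z0 \<noteq> -1" and touch: "\<bar>\<psi> z0\<bar> = M * (1 - inner \<eta> z0)"
  shows "3 * sqrt (1 - (cmod \<eta>)\<^sup>2) * M \<le> 4 * N"
proof -
  define \<mu> where "\<mu> = M * ((1 + Re \<eta>) / 2)"
  have "1 + Re \<eta> > 0"
    using \<eta> by (rule one_plus_Re_pos)
  then have "0 \<le> \<mu>"
    using \<open>0 \<le> M\<close> by (simp add: \<mu>_def)
  note chart_diff = chart_field_abs_minus_weight[OF \<eta>, of \<psi> _ M, unfolded mult.assoc[symmetric]]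
  have majorant: "\<forall>w. \<bar>chart_field \<psi> w\<bar> \<le> \<mu> * ((w - chart_center \<eta>)\<^sup>2 + (chart_radius \<eta>)\<^sup>2)"
  proof
    fix w
    have "(1 + w\<^sup>2) / 2 * (\<bar>\<psi> (cayley w)\<bar> - M * (1 - inner \<eta> (cayley w))) \<le> 0"
      using bound by (simp add: mult_nonneg_nonpos)
    then show "\<bar>chart_field \<psi> w\<bar> \<le> \<mu> * ((w - chart_center \<eta>)\<^sup>2 + (chart_radius \<eta>)\<^sup>2)"
      using chart_diff[of w] by (simp add: \<mu>_def)
  qed
  define v where "v = Im z0 / (1 + Re z0)"
  have "\<bar>chart_field \<psi> v\<bar> = \<mu> * ((v - chart_center \<eta>)\<^sup>2 + (chart_radius \<eta>)\<^sup>2)"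
    using chart_diff[of v] touch cayley_inverse[OF \<open>z0 \<in> sphere 0 1\<close> \<open>z0 \<noteq> -1\<close>]
    by (simp add: \<mu>_def v_def)
  from majorant_touching_bound[OF assms(4) \<open>N \<ge> 0\<close> chart_radius_pos[OF \<eta>] \<open>0 \<le> \<mu>\<close>
      majorant this zeros]
  have "3 * chart_radius \<eta> * \<mu> \<le> 2 * N" .
  moreover have "3 * chart_radius \<eta> * \<mu> = 3 * sqrt (1 - (cmod \<eta>)\<^sup>2) * M / 2"
    using \<open>1 + Re \<eta> > 0\<close> by (simp add: \<mu>_def chart_radius_def)
  ultimately show ?thesis
    by simp
qed

lemma deviation_le_weight:
  fixes \<psi> :: "complex \<Rightarrow> real"
  assumes \<eta>: "cmod \<eta> < 1" and "N \<ge> 0"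
    and cont: "continuous_on (sphere 0 1) \<psi>" and "\<psi> (-1) = 0"
    and "cr_bounded N (chart_field \<psi>)"
    and zeros: "chart_field \<psi> (chart_center \<eta> - chart_radius \<eta> / 2) = 0"
      "chart_field \<psi> (chart_center \<eta> + chart_radius \<eta> / 2) = 0"
    and "z \<in> sphere 0 1"
  shows "\<bar>\<psi> z\<bar> \<le> 4 * N / (3 * sqrt (1 - (cmod \<eta>)\<^sup>2)) * (1 - inner \<eta> z)"
proof -
  define k where "k = sqrt (1 - (cmod \<eta>)\<^sup>2)"
  have "k > 0"
    using \<eta> by (simp add: k_def abs_square_less_1)
  have weight_pos: "\<forall>z\<in>sphere 0 1. 0 < 1 - inner \<eta> z"
    using inner_weight_pos[OF \<eta>] by blast
  obtain M z0 where "z0 \<in> sphere 0 1" "0 \<le> M" and touch: "\<bar>\<psi> z0\<bar> = M * (1 - inner \<eta> z0)"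
    and bound: "\<forall>z\<in>sphere 0 1. \<bar>\<psi> z\<bar> \<le> M * (1 - inner \<eta> z)"
  proof (rule continuous_ratio_attains_max[OF compact_sphere _ cont _ weight_pos])
    show "sphere (0::complex) 1 \<noteq> {}"
      using norm_one by (metis empty_iff mem_sphere_0)
    show "continuous_on (sphere 0 1) (\<lambda>z. 1 - inner \<eta> z)"
      by (intro continuous_intros)
  qed
  have "3 * k * M \<le> 4 * N"
  proof (cases "z0 = -1")
    case True
    then have "M * (1 - inner \<eta> z0) = 0"
      using touch \<open>\<psi> (-1) = 0\<close> by simp
    then have "M = 0"
      using weight_pos \<open>z0 \<in> sphere 0 1\<close> by force
    with \<open>N \<ge> 0\<close> show ?thesis
      by simp
  next
    case False
    with touching_weight_bound[OF \<eta> \<open>N \<ge> 0\<close> \<open>0 \<le> M\<close> _ zeros bound \<open>z0 \<in> sphere 0 1\<close> _ touch]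
      chart_field_second_diff_bounded[OF cont \<open>\<psi> (-1) = 0\<close> assms(5)]
    show ?thesis
      by (simp add: k_def)
  qed
  then have "M * (1 - inner \<eta> z) \<le> 4 * N / (3 * k) * (1 - inner \<eta> z)"
    using \<open>k > 0\<close> weight_pos[rule_format, OF \<open>z \<in> sphere 0 1\<close>]
    by (intro mult_right_mono) (auto simp: field_simps)
  with bound \<open>z \<in> sphere 0 1\<close> show ?thesis
    unfolding k_def by fastforce
qed

lemma quadratic_interpolation:
  fixes x1 x2 y1 y2 A2 :: real
  assumes "x1 \<noteq> x2"
  obtains A0 A1 where "A0 + A1 * x1 + A2 * x1\<^sup>2 = y1" "A0 + A1 * x2 + A2 * x2\<^sup>2 = y2"
proof -
  define m where "m = (y2 - y1) / (x2 - x1)"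
  define A1 where "A1 = m - A2 * (x1 + x2)"
  define A0 where "A0 = y1 - A1 * x1 - A2 * x1\<^sup>2"
  have "y2 = y1 + m * (x2 - x1)"
    using assms by (simp add: m_def)
  then have "A0 + A1 * x2 + A2 * x2\<^sup>2 = y2"
    by (simp add: A0_def A1_def algebra_simps power2_eq_square)
  then show ?thesis
    by (intro that[of A0 A1]) (simp_all add: A0_def)
qed

lemma phi_plus_minus_le:
  fixes \<phi> :: "complex \<Rightarrow> real"
  assumes cont: "continuous_on (sphere 0 1) \<phi>" and "cr_bounded N (chart_field \<phi>)" "N \<ge> 0"
    and \<eta>: "cmod \<eta> < 1"
  shows "phi_plus \<phi> \<eta> - phi_minus \<phi> \<eta> \<le> 8 / 3 * N * sqrt (1 - (cmod \<eta>)\<^sup>2)"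
proof -
  define k where "k = sqrt (1 - (cmod \<eta>)\<^sup>2)"
  have "k > 0"
    using \<eta> by (simp add: k_def abs_square_less_1)
  define K where "K = 4 * N / (3 * k)"
  define x1 x2 where "x1 = chart_center \<eta> - chart_radius \<eta> / 2"
    and "x2 = chart_center \<eta> + chart_radius \<eta> / 2"
  define A2 where "A2 = \<phi> (-1) / 2"
  have "x1 \<noteq> x2"
    using chart_radius_pos[OF \<eta>] by (simp add: x1_def x2_def)
  then obtain A0 A1 where interpolates:
      "A0 + A1 * x1 + A2 * x1\<^sup>2 = chart_field \<phi> x1" "A0 + A1 * x2 + A2 * x2\<^sup>2 = chart_field \<phi> x2"
    by (rule quadratic_interpolation)
  define \<psi> where "\<psi> = (\<lambda>z. \<phi> z - ((A0 + A2) + (A0 - A2) * Re z + A1 * Im z))"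
  have chart_\<psi>: "chart_field \<psi> = (\<lambda>x. chart_field \<phi> x - (A0 + A1 * x + A2 * x\<^sup>2))"
    unfolding \<psi>_def chart_field_diff chart_field_affine ..
  have dev: "\<bar>\<psi> z\<bar> \<le> K * (1 - inner \<eta> z)" if "z \<in> sphere 0 1" for z
    unfolding K_def k_def
  proof (rule deviation_le_weight[OF \<eta> \<open>N \<ge> 0\<close> _ _ _ _ _ that])
    show "continuous_on (sphere 0 1) \<psi>"
      unfolding \<psi>_def by (intro continuous_intros cont)
    show "\<psi> (-1) = 0"
      by (simp add: \<psi>_def A2_def)
    show "cr_bounded N (chart_field \<psi>)"
      unfolding chart_\<psi> by (rule cr_bounded_diff_quadratic) fact
    show "chart_field \<psi> (chart_center \<eta> - chart_radius \<eta> / 2) = 0"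
      "chart_field \<psi> (chart_center \<eta> + chart_radius \<eta> / 2) = 0"
      using interpolates by (simp_all add: chart_\<psi> x1_def x2_def)
  qed
  have "phi_plus \<phi> \<eta> - phi_minus \<phi> \<eta> \<le> 2 * K * (1 - (cmod \<eta>)\<^sup>2)"
    using dev \<eta> by (intro phi_plus_minus_le_weight_band) (auto simp: \<psi>_def)
  also have "1 - (cmod \<eta>)\<^sup>2 = k\<^sup>2"
    using \<eta> by (simp add: k_def abs_square_less_1 less_imp_le)
  also have "2 * K * k\<^sup>2 = 8 / 3 * N * k"
    using \<open>k > 0\<close> by (simp add: K_def power2_eq_square)
  finally show ?thesis
    by (simp add: k_def)
qed

theorem proposition5p1:
  fixes \<phi> :: "complex \<Rightarrow> real"
  assumes "zygmund \<phi>"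
  shows "width \<phi> \<le> ereal (8 / 3) * cr_norm \<phi>"
proof -
  have cont: "continuous_on (sphere 0 1) \<phi>" and "cr_norm \<phi> < \<infinity>"
    using assms unfolding zygmund_def by auto
  have le_cr_norm: "ereal \<bar>field_cr (chart_field \<phi>) a b c d\<bar> \<le> cr_norm \<phi>"
    if "cross_ratio a b c d = 1" for a b c d
    unfolding cr_norm_def by (rule SUP_upper2[of "(a, b, c, d)"]) (use that in auto)
  have "cross_ratio 0 (3 / 2) 2 3 = 1"
    by (simp add: cross_ratio_def)
  from le_cr_norm[OF this] have "0 \<le> cr_norm \<phi>"
    by (metis abs_ge_zero ereal_less_eq(5) order_trans zero_ereal_def)
  then obtain N where N: "cr_norm \<phi> = ereal N" "N \<ge> 0"
    using \<open>cr_norm \<phi> < \<infinity>\<close> by (cases "cr_norm \<phi>") auto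
  have "cr_bounded N (chart_field \<phi>)"
    using le_cr_norm N(1) by (simp add: cr_bounded_def)
  have "width \<phi> \<le> ereal (8 / 3 * N)"
    unfolding width_def
  proof (rule SUP_least)
    fix \<eta> :: complex
    assume "\<eta> \<in> ball 0 1"
    then have "sqrt (1 - (cmod \<eta>)\<^sup>2) > 0"
      by (simp add: abs_square_less_1)
    with phi_plus_minus_le[OF cont \<open>cr_bounded N (chart_field \<phi>)\<close> N(2)] \<open>\<eta> \<in> ball 0 1\<close>
    show "ereal ((phi_plus \<phi> \<eta> - phi_minus \<phi> \<eta>) / sqrt (1 - (cmod \<eta>)\<^sup>2)) \<le> ereal (8 / 3 * N)"
      by (simp add: divide_le_eq)
  qed
  then show ?thesis
    using N(1) by simp
qed

end
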